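(* Let $\Lambda\ge3$ be an integer, $k\ge\Lambda^2(\Lambda+1)^2$, and let $$\widetilde{\bm{\chi}}=\sum_{l=0}^{\Lambda}\sqrt{\frac{2}{\Lambda+2}}\,\sin\!\left(\frac{(l+1)\pi}{\Lambda+2}\right)\bm{\psi}_l^0\in\mathcal{H}_\Lambda .$$ Then $$(\Delta\bm{x})^2_{\widetilde{\bm{\chi}}}<\frac{\pi^2}{(\Lambda+2)^2}+\frac{1}{(\Lambda+1)^2}<\frac{11}{(\Lambda+1)^2}.$$ In particular $\min_{\bm\chi}(\Delta\bm{x})^2_{\bm\chi}\le(\Delta\bm{x})^2_{\widetilde{\bm{\chi}}}<\frac{1}{\Lambda+1}$, the minimum being over unit vectors of $\mathcal{H}_\Lambda$.
   Context: (Fuzzy sphere $S^2_\Lambda$.) $\mathcal{H}_\Lambda$ is a Hilbert space with orthonormal basis $\{\bm{\psi}_l^m\}_{l=0,\dots,\Lambda;\ |m|\le l}$. Coordinates $x_a$, $a\in\{0,+,-\}$ (with $\pm\equiv\pm1$ in $m+a$): for $l<\Lambda$, $x_a\bm{\psi}_l^m=c_lA_l^{a,m}\bm{\psi}_{l-1}^{m+a}+c_{l+1}B_l^{a,m}\bm{\psi}_{l+1}^{m+a}$; for $l=\Lambda$, $x_a\bm{\psi}_\Lambda^m=c_\Lambda A_\Lambda^{a,m}\bm{\psi}_{\Lambda-1}^{m+a}$; here $A_l^{0,m}=\sqrt{\frac{(l+m)(l-m)}{(2l+1)(2l-1)}}$, $A_l^{\pm,m}=\pm\sqrt{\frac{(l\mp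 m)(l\mp m-1)}{(2l-1)(2l+1)}}$, $B_l^{a,m}=A_{l+1}^{-a,m+a}$, $c_l=\sqrt{1+l^2/k}$ for $1\le l\le\Lambda$, $c_0=0$ (terms whose coefficient vanishes are absent). Set $x_3=x_0$, $x_1=(x_++x_-)/2$, $x_2=(x_+-x_-)/(2i)$, $\bm{x}^2=\sum_i x_i^2$. For a unit vector $\bm\chi$, $\langle A\rangle_{\bm\chi}=\langle\bm\chi,A\bm\chi\rangle$ and $(\Delta\bm{x})^2_{\bm\chi}=\langle\bm{x}^2\rangle_{\bm\chi}-\sum_i\langle x_i\rangle_{\bm\chi}^2$. *)

theory Defs
  imports "HOL-Analysis.Analysis"
begin

text \<open>A vector of the Hilbert space H_Lambda is represented by its
coefficient function (l,m) -> complex with respect to the orthonormal basis psi_l^m;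
only indices in fs_idx Lambda (0 <= l <= Lambda, |m| <= l) are meaningful.\<close>

definition fs_idx :: "nat \<Rightarrow> (nat \<times> int) set" where
  "fs_idx L = {(l, m). l \<le> L \<and> \<bar>m\<bar> \<le> int l}"

type_synonym fs_vec = "nat \<times> int \<Rightarrow> complex"

definition fs_c :: "real \<Rightarrow> nat \<Rightarrow> real" where
  "fs_c k l = (if l = 0 then 0 else sqrt (1 + (real l)\<^sup>2 / k))"

definition fs_A :: "nat \<Rightarrow> int \<Rightarrow> int \<Rightarrow> real" where
  "fs_A l a m = (if a = 0
     then sqrt ((real_of_int (int l + m) * real_of_int (int l - m)) / ((2 * real l + 1) * (2 * real l - 1)))
     else real_of_int a * sqrt ((real_of_int (int l - a * m) * real_of_int (int l - a * m - 1))
                                 / ((2 * real l - 1) * (2 * real l + 1))))"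

definition fs_B :: "nat \<Rightarrow> int \<Rightarrow> int \<Rightarrow> real" where
  "fs_B l a m = fs_A (l + 1) (- a) (m + a)"

text \<open>Image x_a psi_l^m of a basis vector (a in {0,1,-1}); the B-term is absent for l = Lambda,
  the A-term is absent for l = 0 (c_0 = 0); components outside fs_idx are dropped.\<close>
definition fs_x_basis :: "nat \<Rightarrow> real \<Rightarrow> int \<Rightarrow> nat \<Rightarrow> int \<Rightarrow> fs_vec" where
  "fs_x_basis L k a l m = (\<lambda>(l', m').
      if (l', m') \<in> fs_idx L \<and> m' = m + a then
        (if l' + 1 = l then complex_of_real (fs_c k l * fs_A l a m) else 0)
        + (if l' = l + 1 \<and> l < L then complex_of_real (fs_c k (l + 1) * fs_B l a m) else 0)
      else 0)"

definition fs_xa :: "nat \<Rightarrow> real \<Rightarrow> int \<Rightarrow> fs_vec \<Rightarrow> fs_vec" where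
  "fs_xa L k a v = (\<lambda>p. \<Sum>q\<in>fs_idx L. v q * fs_x_basis L k a (fst q) (snd q) p)"

definition fs_x :: "nat \<Rightarrow> real \<Rightarrow> nat \<Rightarrow> fs_vec \<Rightarrow> fs_vec" where
  "fs_x L k i v = (if i = 1 then (\<lambda>p. (fs_xa L k 1 v p + fs_xa L k (-1) v p) / 2)
                   else if i = 2 then (\<lambda>p. (fs_xa L k 1 v p - fs_xa L k (-1) v p) / (2 * \<i>))
                   else fs_xa L k 0 v)"

definition fs_inner :: "nat \<Rightarrow> fs_vec \<Rightarrow> fs_vec \<Rightarrow> complex" where
  "fs_inner L u w = (\<Sum>p\<in>fs_idx L. cnj (u p) * w p)"

definition fs_unit :: "nat \<Rightarrow> fs_vec \<Rightarrow> bool" where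
  "fs_unit L v \<longleftrightarrow> (\<forall>p. p \<notin> fs_idx L \<longrightarrow> v p = 0) \<and> fs_inner L v v = 1"

definition fs_expect :: "nat \<Rightarrow> (fs_vec \<Rightarrow> fs_vec) \<Rightarrow> fs_vec \<Rightarrow> complex" where
  "fs_expect L A chi = fs_inner L chi (A chi)"

text \<open>(Delta x)^2_chi = <x^2>_chi - sum_i <x_i>_chi^2, with x^2 = sum_i x_i x_i.
  The x_i are Hermitian, so this quantity is real; we take its real part.\<close>
definition fs_var :: "nat \<Rightarrow> real \<Rightarrow> fs_vec \<Rightarrow> real" where
  "fs_var L k chi = Re ((\<Sum>i\<in>{1,2,3}. fs_expect L (\<lambda>v. fs_x L k i (fs_x L k i v)) chi)
                       - (\<Sum>i\<in>{1,2,3}. (fs_expect L (fs_x L k i) chi)\<^sup>2))"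

definition fs_chi_tilde :: "nat \<Rightarrow> fs_vec" where
  "fs_chi_tilde L = (\<lambda>(l, m). if l \<le> L \<and> m = 0
       then complex_of_real (sqrt (2 / (real L + 2)) * sin ((real l + 1) * pi / (real L + 2)))
       else 0)"

end

theory Submission
  imports Defs
begin

text \<open>The trial state is zonal (m = 0). The operators x_+ and x_- move it out of the m = 0 sector,
  so \<langle>x_1\<rangle> = \<langle>x_2\<rangle> = 0, while x^2 = (x_+ x_- + x_- x_+)/2 + x_0^2 acts diagonally on
  zonal states: the hops l \<rightarrow> l \<plusminus> 2 cancel, and psi_l^0 has eigenvalue 1 + (l^2 + l + 1)/k for
  l < \<Lambda>, but only about 1/2 for l = \<Lambda>. The remaining first moment \<langle>x_3\<rangle> is a
  hopping form with coefficients c_l A_l^{0,0} \<ge> 1/2; since the sine amplitudes form the ground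
  state of the discrete Laplacian with Dirichlet boundary conditions, \<langle>x_3\<rangle> \<ge> cos(pi/(\<Lambda>+2)).
  Hence (\<Delta>x)^2 \<le> sin^2(pi/(\<Lambda>+2)) + O(1/k). A minimiser exists because the variance is
  continuous on the compact unit sphere of H_\<Lambda>.\<close>

section \<open>The coordinate operators\<close>

definition fs_supported :: "nat \<Rightarrow> fs_vec \<Rightarrow> bool" where
  "fs_supported L v \<longleftrightarrow> (\<forall>p. p \<notin> fs_idx L \<longrightarrow> v p = 0)"

lemma finite_fs_idx [simp]: "finite (fs_idx L)"
proof -
  have "fs_idx L \<subseteq> {0..L} \<times> {- int L..int L}" by (auto simp: fs_idx_def)
  then show ?thesis by (rule finite_subset) auto
qed

lemma mem_fs_idx_iff: "(l, m) \<in> fs_idx L \<longleftrightarrow> l \<le> L \<and> \<bar>m\<bar> \<le> int l"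
  by (simp add: fs_idx_def)

lemma fs_supported_fs_xa: "fs_supported L (fs_xa L k a v)"
  by (auto simp: fs_supported_def fs_xa_def fs_x_basis_def)

lemma fs_xa_linear:
  "fs_xa L k a (\<lambda>p. \<alpha> * u p + \<beta> * w p) q = \<alpha> * fs_xa L k a u q + \<beta> * fs_xa L k a w q"
  by (simp add: fs_xa_def sum.distrib sum_distrib_left algebra_simps)

lemma fs_xa_apply:
  assumes "fs_supported L v" and "(l, m) \<in> fs_idx L"
  shows "fs_xa L k a v (l, m) =
      v (l + 1, m - a) * fs_c k (l + 1) * fs_A (l + 1) a (m - a)
    + (if 1 \<le> l then v (l - 1, m - a) * fs_c k l * fs_B (l - 1) a (m - a) else 0)"
proof -
  have "fs_xa L k a v (l, m) = (\<Sum>q\<in>fs_idx L.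
      (if q = (l + 1, m - a) then v q * fs_c k (fst q) * fs_A (fst q) a (snd q) else 0)
    + (if 1 \<le> l \<and> q = (l - 1, m - a) then v q * fs_c k (fst q + 1) * fs_B (fst q) a (snd q) else 0))"
    unfolding fs_xa_def
    by (rule sum.cong) (use assms(2) in \<open>auto simp: fs_x_basis_def fs_idx_def\<close>)
  also have "\<dots> = (if (l + 1, m - a) \<in> fs_idx L then v (l + 1, m - a) * fs_c k (l + 1) * fs_A (l + 1) a (m - a) else 0)
     + (if 1 \<le> l \<and> (l - 1, m - a) \<in> fs_idx L then v (l - 1, m - a) * fs_c k l * fs_B (l - 1) a (m - a) else 0)"
    by (cases "1 \<le> l") (simp_all add: sum.distrib sum.delta)
  finally show ?thesis
    using assms(1) unfolding fs_supported_def by auto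
qed

lemma sum_123: "(\<Sum>i\<in>{1,2,3::nat}. g i) = g 1 + g 2 + g 3"
  by (simp add: numeral_2_eq_2 numeral_3_eq_3 add.assoc)

text \<open>The terms x_+ x_+ and x_- x_- cancel between x_1^2 and x_2^2.\<close>
lemma fs_x_sq_sum:
  "(\<Sum>i\<in>{1,2,3}. fs_x L k i (fs_x L k i v) p)
     = (fs_xa L k 1 (fs_xa L k (-1) v) p + fs_xa L k (-1) (fs_xa L k 1 v) p) / 2
       + fs_xa L k 0 (fs_xa L k 0 v) p"
proof -
  have x1: "fs_x L k 1 u = (\<lambda>p. 1/2 * fs_xa L k 1 u p + 1/2 * fs_xa L k (-1) u p)" for u
    by (simp add: fs_x_def fun_eq_iff)
  have x2: "fs_x L k 2 u = (\<lambda>p. 1/(2*\<i>) * fs_xa L k 1 u p + (-1/(2*\<i>)) * fs_xa L k (-1) u p)" for u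
    by (simp add: fs_x_def fun_eq_iff field_simps)
  have x3: "fs_x L k 3 = fs_xa L k 0"
    by (simp add: fs_x_def fun_eq_iff)
  show ?thesis
    unfolding sum_123 x1 x2 x3 fs_xa_linear by (simp add: field_simps)
qed

lemma fs_A_minus_0: "fs_A n (-1) 0 = - fs_A n 1 0"
  by (simp add: fs_A_def)

lemma fs_A_minus_1: "fs_A n (-1) 1 = - fs_A n 1 (-1)"
  by (simp add: fs_A_def algebra_simps)

lemma fs_A_1_1_0: "fs_A (Suc 0) 1 0 = 0"
  by (simp add: fs_A_def)

lemma fs_A_0_0: "fs_A n 0 0 = sqrt (real n ^ 2 / ((2 * real n + 1) * (2 * real n - 1)))"
  by (simp add: fs_A_def power2_eq_square)

lemma fs_A_1_0: "fs_A n 1 0 = sqrt (real n * (real n - 1) / ((2 * real n - 1) * (2 * real n + 1)))"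
  by (simp add: fs_A_def)

lemma fs_A_1_minus_1: "fs_A n 1 (-1) = sqrt ((real n + 1) * real n / ((2 * real n - 1) * (2 * real n + 1)))"
  by (simp add: fs_A_def algebra_simps)

lemma fs_A_hop_cancel: "fs_A n 0 0 * fs_A (Suc n) 0 0 = fs_A n 1 (-1) * fs_A (Suc n) 1 0"
proof -
  have "fs_A n 0 0 * fs_A (Suc n) 0 0 = sqrt (real n ^ 2 / ((2 * real n + 1) * (2 * real n - 1))
          * ((real n + 1) ^ 2 / ((2 * real n + 3) * (2 * real n + 1))))"
    by (simp add: fs_A_0_0 real_sqrt_mult[symmetric] algebra_simps)
  also have "\<dots> = sqrt ((real n + 1) * real n / ((2 * real n - 1) * (2 * real n + 1))
          * ((real n + 1) * real n / ((2 * real n + 1) * (2 * real n + 3))))"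
    by (rule arg_cong[where f = sqrt]) (simp add: field_simps power2_eq_square)
  also have "\<dots> = fs_A n 1 (-1) * fs_A (Suc n) 1 0"
    by (simp add: fs_A_1_minus_1 fs_A_1_0 real_sqrt_mult[symmetric] algebra_simps)
  finally show ?thesis .
qed

lemma fs_A_sq_sum_up:
  assumes "1 \<le> n"
  shows "fs_A n 0 0 ^ 2 + fs_A n 1 (-1) ^ 2 = real n / (2 * real n - 1)"
proof -
  have pos: "2 * real n - 1 > 0" using assms by simp
  have "fs_A n 0 0 ^ 2 + fs_A n 1 (-1) ^ 2
      = real n ^ 2 / ((2 * real n + 1) * (2 * real n - 1))
        + (real n + 1) * real n / ((2 * real n - 1) * (2 * real n + 1))"
    unfolding fs_A_0_0 fs_A_1_minus_1 using pos by (simp add: real_sqrt_pow2)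
  also have "\<dots> = real n / (2 * real n - 1)"
    using pos by (simp add: divide_simps) (simp add: algebra_simps power2_eq_square)
  finally show ?thesis .
qed

lemma fs_A_sq_sum_down:
  assumes "1 \<le> n"
  shows "fs_A n 0 0 ^ 2 + fs_A n 1 0 ^ 2 = real n / (2 * real n + 1)"
proof -
  have pos: "2 * real n - 1 > 0" and "real n - 1 \<ge> 0" using assms by auto
  then have "fs_A n 0 0 ^ 2 + fs_A n 1 0 ^ 2
      = real n ^ 2 / ((2 * real n + 1) * (2 * real n - 1))
        + real n * (real n - 1) / ((2 * real n - 1) * (2 * real n + 1))"
    unfolding fs_A_0_0 fs_A_1_0 by (simp add: real_sqrt_pow2)
  also have "\<dots> = real n / (2 * real n + 1)"
    using pos by (simp add: divide_simps) (simp add: algebra_simps power2_eq_square)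
  finally show ?thesis .
qed

section \<open>Zonal states\<close>

definition fs_zonal :: "nat \<Rightarrow> (nat \<Rightarrow> real) \<Rightarrow> fs_vec" where
  "fs_zonal L f = (\<lambda>(l, m). if l \<le> L \<and> m = 0 then complex_of_real (f l) else 0)"

lemma fs_supported_fs_zonal: "fs_supported L (fs_zonal L f)"
  by (auto simp: fs_supported_def fs_zonal_def fs_idx_def)

lemma fs_inner_fs_zonal: "fs_inner L (fs_zonal L f) w = (\<Sum>l\<le>L. f l * w (l, 0))"
proof -
  have "fs_inner L (fs_zonal L f) w = (\<Sum>p\<in>(\<lambda>l. (l, 0)) ` {..L}. cnj (fs_zonal L f p) * w p)"
    unfolding fs_inner_def
    by (rule sum.mono_neutral_right) (auto simp: fs_zonal_def mem_fs_idx_iff)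
  also have "\<dots> = (\<Sum>l\<le>L. f l * w (l, 0))"
    by (subst sum.reindex) (auto simp: inj_on_def fs_zonal_def)
  finally show ?thesis .
qed

lemma fs_unit_fs_zonal:
  assumes "(\<Sum>l\<le>L. f l ^ 2) = 1"
  shows "fs_unit L (fs_zonal L f)"
proof -
  have "fs_inner L (fs_zonal L f) (fs_zonal L f) = complex_of_real (\<Sum>l\<le>L. f l ^ 2)"
    unfolding fs_inner_fs_zonal by (simp add: fs_zonal_def power2_eq_square)
  then show ?thesis
    using assms fs_supported_fs_zonal unfolding fs_unit_def fs_supported_def by simp
qed

definition zonal_xa :: "real \<Rightarrow> int \<Rightarrow> (nat \<Rightarrow> real) \<Rightarrow> nat \<Rightarrow> real" where
  "zonal_xa k a f l = f (l + 1) * fs_c k (l + 1) * fs_A (l + 1) a 0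
     + (if 1 \<le> l then f (l - 1) * fs_c k l * fs_B (l - 1) a 0 else 0)"

text \<open>fs_zonal L f only sees f on {..L}; the hypothesis f (Suc L) = 0 lets zonal_xa use
  f (l + 1) without a case distinction at l = L.\<close>
lemma fs_xa_fs_zonal:
  assumes "f (Suc L) = 0"
  shows "fs_xa L k a (fs_zonal L f) (l, m)
           = (if (l, m) \<in> fs_idx L \<and> m = a then zonal_xa k a f l else 0)"
proof (cases "(l, m) \<in> fs_idx L")
  case True
  then have "l \<le> L" by (simp add: fs_idx_def)
  with True assms show ?thesis
    unfolding fs_xa_apply[OF fs_supported_fs_zonal True]
    by (cases "l = L") (auto simp: fs_zonal_def zonal_xa_def)
next
  case False
  then show ?thesis
    using fs_supported_fs_xa unfolding fs_supported_def by auto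
qed

definition zonal_xx :: "nat \<Rightarrow> real \<Rightarrow> int \<Rightarrow> (nat \<Rightarrow> real) \<Rightarrow> nat \<Rightarrow> real" where
  "zonal_xx L k a f l =
     (if l < L then zonal_xa k (-a) f (l + 1) * fs_c k (l + 1) * fs_A (l + 1) a (-a) else 0)
   + (if \<bar>a\<bar> < int l then zonal_xa k (-a) f (l - 1) * fs_c k l * fs_B (l - 1) a (-a) else 0)"

lemma fs_xa_xa_fs_zonal:
  assumes "f (Suc L) = 0" and "l \<le> L" and "\<bar>a\<bar> \<le> 1"
  shows "fs_xa L k a (fs_xa L k (-a) (fs_zonal L f)) (l, 0) = zonal_xx L k a f l"
  using assms
  by (auto simp: fs_xa_apply[OF fs_supported_fs_xa] fs_xa_fs_zonal zonal_xx_def mem_fs_idx_iff)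

lemma zonal_xx_sum_expand:
  "(zonal_xx L k 1 f l + zonal_xx L k (-1) f l) / 2 + zonal_xx L k 0 f l =
     (if l < L then f (l + 2) * fs_c k (l + 1) * fs_c k (l + 2)
                      * (fs_A (l + 1) 0 0 * fs_A (l + 2) 0 0 - fs_A (l + 1) 1 (-1) * fs_A (l + 2) 1 0)
                  + f l * fs_c k (l + 1) ^ 2 * (fs_A (l + 1) 0 0 ^ 2 + fs_A (l + 1) 1 (-1) ^ 2)
      else 0)
   + (if 1 \<le> l then f l * fs_c k l ^ 2 * (fs_A l 0 0 ^ 2 + fs_A l 1 0 ^ 2) else 0)
   + (if 2 \<le> l then f (l - 2) * fs_c k (l - 1) * fs_c k l
                      * (fs_A (l - 1) 0 0 * fs_A l 0 0 - fs_A (l - 1) 1 (-1) * fs_A l 1 0)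
      else 0)"
proof -
  consider "l = 0" | "l = 1" | j where "l = Suc (Suc j)"
    by (metis One_nat_def not0_implies_Suc)
  then show ?thesis
    by cases (simp_all add: zonal_xx_def zonal_xa_def fs_B_def fs_A_minus_0 fs_A_minus_1
                fs_A_1_1_0 field_simps power2_eq_square)
qed

definition xsq_eig :: "nat \<Rightarrow> real \<Rightarrow> nat \<Rightarrow> real" where
  "xsq_eig L k l = (if l < L then fs_c k (l + 1) ^ 2 * (real l + 1) / (2 * real l + 1) else 0)
                 + (if 1 \<le> l then fs_c k l ^ 2 * real l / (2 * real l + 1) else 0)"

lemma zonal_xx_sum_diagonal:
  "(zonal_xx L k 1 f l + zonal_xx L k (-1) f l) / 2 + zonal_xx L k 0 f l = xsq_eig L k l * f l"
proof -
  have up: "fs_A (l + 1) 0 0 ^ 2 + fs_A (l + 1) 1 (-1) ^ 2 = (real l + 1) / (2 * real l + 1)"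
    using fs_A_sq_sum_up[of "l + 1"] by (simp add: algebra_simps)
  have down: "1 \<le> l \<Longrightarrow> fs_A l 0 0 ^ 2 + fs_A l 1 0 ^ 2 = real l / (2 * real l + 1)"
    by (rule fs_A_sq_sum_down)
  have hop: "fs_A n 0 0 * fs_A (n + 1) 0 0 - fs_A n 1 (-1) * fs_A (n + 1) 1 0 = 0" for n
    using fs_A_hop_cancel[of n] by simp
  have hop': "2 \<le> l \<Longrightarrow> fs_A (l - 1) 0 0 * fs_A l 0 0 - fs_A (l - 1) 1 (-1) * fs_A l 1 0 = 0"
    using hop[of "l - 1"] by simp
  show ?thesis
    unfolding zonal_xx_sum_expand xsq_eig_def
    using up down hop[of "l + 1"] hop' by (simp add: algebra_simps)
qed

lemma fs_x_sq_sum_fs_zonal: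
  assumes "f (Suc L) = 0" and "l \<le> L"
  shows "(\<Sum>i\<in>{1,2,3}. fs_x L k i (fs_x L k i (fs_zonal L f)) (l, 0)) = xsq_eig L k l * f l"
proof -
  note xx = fs_xa_xa_fs_zonal[where f = f and L = L and k = k, OF assms]
  have "(\<Sum>i\<in>{1,2,3}. fs_x L k i (fs_x L k i (fs_zonal L f)) (l, 0))
      = (zonal_xx L k 1 f l + zonal_xx L k (-1) f l) / 2 + zonal_xx L k 0 f l"
    unfolding fs_x_sq_sum using xx[of 1] xx[of "-1"] xx[of 0] by simp
  then show ?thesis
    unfolding zonal_xx_sum_diagonal by simp
qed

lemma fs_var_fs_zonal:
  assumes "f (Suc L) = 0"
  shows "fs_var L k (fs_zonal L f)
           = (\<Sum>l\<le>L. f l ^ 2 * xsq_eig L k l) - (\<Sum>l\<le>L. f l * zonal_xa k 0 f l) ^ 2"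
proof -
  let ?z = "fs_zonal L f"
  have second: "(\<Sum>i\<in>{1,2,3}. fs_expect L (\<lambda>v. fs_x L k i (fs_x L k i v)) ?z)
      = (\<Sum>l\<le>L. f l ^ 2 * xsq_eig L k l)"
  proof -
    have "(\<Sum>i\<in>{1,2,3}. fs_expect L (\<lambda>v. fs_x L k i (fs_x L k i v)) ?z)
        = (\<Sum>l\<le>L. f l * (\<Sum>i\<in>{1,2,3}. fs_x L k i (fs_x L k i ?z) (l, 0)))"
      unfolding fs_expect_def fs_inner_fs_zonal sum_distrib_left by (rule sum.swap)
    also have "\<dots> = (\<Sum>l\<le>L. complex_of_real (f l) * complex_of_real (xsq_eig L k l * f l))"
      by (rule sum.cong[OF refl]) (simp only: fs_x_sq_sum_fs_zonal[where f = f, OF assms] atMost_iff)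
    finally show ?thesis
      by (simp add: power2_eq_square mult_ac)
  qed
  have first: "fs_expect L (fs_x L k i) ?z
      = (if i = 3 then (\<Sum>l\<le>L. f l * zonal_xa k 0 f l) else 0)" if "i \<in> {1,2,3}" for i
    using that
    by (auto simp: fs_expect_def fs_inner_fs_zonal fs_x_def fs_xa_fs_zonal[where f = f, OF assms] mem_fs_idx_iff)
  show ?thesis
    unfolding fs_var_def second by (simp add: first sum_123)
qed

section \<open>The sine profile\<close>

definition sine_amp :: "nat \<Rightarrow> nat \<Rightarrow> real" where
  "sine_amp L l = sqrt (2 / (real L + 2)) * sin ((real l + 1) * (pi / (real L + 2)))"

lemma fs_chi_tilde_eq_fs_zonal: "fs_chi_tilde L = fs_zonal L (sine_amp L)"
  by (simp add: fun_eq_iff fs_chi_tilde_def fs_zonal_def sine_amp_def)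

lemma sine_amp_Suc_self: "sine_amp L (Suc L) = 0"
proof -
  have "(real (Suc L) + 1) * (pi / (real L + 2)) = pi" by (simp add: field_simps)
  then show ?thesis by (simp add: sine_amp_def)
qed

lemma sine_amp_self: "sine_amp L L = sqrt (2 / (real L + 2)) * sin (pi / (real L + 2))"
proof -
  have "(real L + 1) * (pi / (real L + 2)) = pi - pi / (real L + 2)" by (simp add: field_simps)
  then show ?thesis by (simp add: sine_amp_def)
qed

lemma sine_amp_nonneg:
  assumes "l \<le> Suc L"
  shows "0 \<le> sine_amp L l"
proof -
  have "(real l + 1) * (pi / (real L + 2)) \<le> (real L + 2) * (pi / (real L + 2))"
    using assms by (intro mult_right_mono) auto
  then show ?thesis
    unfolding sine_amp_def by (intro mult_nonneg_nonneg sin_ge_zero) auto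
qed

lemma sine_amp_sq_le: "sine_amp L l ^ 2 \<le> 2 / (real L + 2)"
proof -
  have "sine_amp L l ^ 2 = 2 / (real L + 2) * sin ((real l + 1) * (pi / (real L + 2))) ^ 2"
    by (simp add: sine_amp_def power_mult_distrib)
  also have "\<dots> \<le> 2 / (real L + 2) * 1"
    by (intro mult_left_mono) (auto simp: abs_square_le_1)
  finally show ?thesis by simp
qed

text \<open>The sine profile is an eigenvector of the discrete Laplacian with Dirichlet boundary
  values at l = -1 and l = L + 1.\<close>
lemma sine_amp_rec:
  "sine_amp L (l + 2) + sine_amp L l = 2 * cos (pi / (real L + 2)) * sine_amp L (l + 1)"
proof -
  define t where "t = pi / (real L + 2)"
  have "((real (l + 2) + 1) * t + (real l + 1) * t) / 2 = (real (l + 1) + 1) * t"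
   and "((real (l + 2) + 1) * t - (real l + 1) * t) / 2 = t"
    by (simp_all add: field_simps)
  then have "sin ((real (l + 2) + 1) * t) + sin ((real l + 1) * t) = 2 * sin ((real (l + 1) + 1) * t) * cos t"
    by (simp only: sin_plus_sin)
  then have "sqrt (2 / (real L + 2)) * (sin ((real (l + 2) + 1) * t) + sin ((real l + 1) * t))
               = sqrt (2 / (real L + 2)) * (2 * sin ((real (l + 1) + 1) * t) * cos t)"
    by simp
  then show ?thesis
    unfolding sine_amp_def t_def[symmetric] by (simp add: algebra_simps)
qed

lemma sine_amp_1: "sine_amp L 1 = 2 * cos (pi / (real L + 2)) * sine_amp L 0"
  using sin_double[of "pi / (real L + 2)"] by (simp add: sine_amp_def mult_ac)

lemma sum_cos_telescope:
  "2 * sin t * (\<Sum>l<n. cos (2 * (real l + 1) * t)) = sin ((2 * real n + 1) * t) - sin t"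
proof (induction n)
  case (Suc n)
  have "((2 * real (Suc n) + 1) * t - (2 * real n + 1) * t) / 2 = t"
   and "((2 * real (Suc n) + 1) * t + (2 * real n + 1) * t) / 2 = 2 * (real n + 1) * t"
    by (simp_all add: field_simps)
  then have "sin ((2 * real (Suc n) + 1) * t) - sin ((2 * real n + 1) * t) = 2 * sin t * cos (2 * (real n + 1) * t)"
    by (simp only: sin_diff_sin)
  then show ?case using Suc by (simp add: algebra_simps)
qed simp

lemma sum_sine_amp_sq: "(\<Sum>l\<le>L. sine_amp L l ^ 2) = 1"
proof -
  define t where "t = pi / (real L + 2)"
  have "pi * 1 < pi * (real L + 2)" by (intro mult_strict_left_mono) auto
  then have "0 < t" "t < pi" unfolding t_def by (auto simp: divide_less_eq)
  then have "sin t > 0" by (simp add: sin_gt_zero)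
  have "sin ((2 * real (L + 1) + 1) * t) = sin (2 * pi - t)"
    unfolding t_def by (rule arg_cong[where f = sin]) (simp add: field_simps)
  then have "2 * sin t * (\<Sum>l<L + 1. cos (2 * (real l + 1) * t)) = 2 * sin t * (-1)"
    using sum_cos_telescope[of t "L + 1"] by simp
  then have cos_sum: "(\<Sum>l<L + 1. cos (2 * (real l + 1) * t)) = -1"
    using \<open>sin t > 0\<close> by (subst (asm) mult_cancel_left) simp
  have "(\<Sum>l\<le>L. sin ((real l + 1) * t) ^ 2) = (\<Sum>l<L + 1. (1 - cos (2 * (real l + 1) * t)) / 2)"
  proof (rule sum.cong)
    fix l
    have "cos (2 * (real l + 1) * t) = 1 - 2 * sin ((real l + 1) * t) ^ 2"
      using cos_double_sin[of "(real l + 1) * t"] by (simp only: mult.assoc)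
    then show "sin ((real l + 1) * t) ^ 2 = (1 - cos (2 * (real l + 1) * t)) / 2" by simp
  qed auto
  also have "\<dots> = (real L + 1) / 2 - (\<Sum>l<L + 1. cos (2 * (real l + 1) * t)) / 2"
    by (simp only: diff_divide_distrib sum_subtractf sum_divide_distrib[symmetric]) simp
  also have "\<dots> = (real L + 2) / 2"
    using cos_sum by simp
  finally have "(\<Sum>l\<le>L. sin ((real l + 1) * t) ^ 2) = (real L + 2) / 2" .
  moreover have "(\<Sum>l\<le>L. sine_amp L l ^ 2) = 2 / (real L + 2) * (\<Sum>l\<le>L. sin ((real l + 1) * t) ^ 2)"
    by (simp add: sine_amp_def t_def power_mult_distrib sum_distrib_left)
  ultimately show ?thesis by simp
qed

lemma fs_unit_fs_chi_tilde: "fs_unit L (fs_chi_tilde L)"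
  unfolding fs_chi_tilde_eq_fs_zonal by (rule fs_unit_fs_zonal[OF sum_sine_amp_sq])

section \<open>Moments of the trial state\<close>

lemma fs_c_sq: "0 < k \<Longrightarrow> 1 \<le> n \<Longrightarrow> fs_c k n ^ 2 = 1 + real n ^ 2 / k"
  by (simp add: fs_c_def add_pos_nonneg)

lemma one_le_fs_c: "0 < k \<Longrightarrow> 1 \<le> n \<Longrightarrow> 1 \<le> fs_c k n"
  by (simp add: fs_c_def)

lemma xsq_eig_below_top:
  assumes "l < L" and "0 < k"
  shows "xsq_eig L k l = 1 + (real l ^ 2 + real l + 1) / k"
proof (cases "l = 0")
  case True
  then show ?thesis using assms by (simp add: xsq_eig_def fs_c_sq)
next
  case False
  then have "xsq_eig L k l = (1 + (real l + 1) ^ 2 / k) * (real l + 1) / (2 * real l + 1)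
                            + (1 + real l ^ 2 / k) * real l / (2 * real l + 1)"
    using assms by (simp add: xsq_eig_def fs_c_sq)
  also have "\<dots> = 1 + (real l ^ 2 + real l + 1) / k"
    using assms(2) by (simp add: divide_simps) (simp add: algebra_simps power2_eq_square)
  finally show ?thesis .
qed

lemma xsq_eig_top:
  assumes "1 \<le> L" and "0 < k"
  shows "xsq_eig L k L = (1 + real L ^ 2 / k) * real L / (2 * real L + 1)"
  using assms by (simp add: xsq_eig_def fs_c_sq)

lemma half_le_fs_A_0_0:
  assumes "1 \<le> n"
  shows "1/2 \<le> fs_A n 0 0"
proof -
  have "(2 * real n + 1) * (2 * real n - 1) > 0" using assms by simp
  then have "1/4 \<le> real n ^ 2 / ((2 * real n + 1) * (2 * real n - 1))"
    by (simp add: field_simps power2_eq_square)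
  then have "sqrt (1/4) \<le> fs_A n 0 0"
    unfolding fs_A_0_0 by (rule real_sqrt_le_mono)
  then show ?thesis by (simp add: real_sqrt_divide)
qed

lemma fs_A_1_0_0_ge: "577/1000 \<le> fs_A 1 0 0"
proof -
  have "sqrt ((577/1000)^2) \<le> fs_A 1 0 0"
    unfolding fs_A_0_0 by (rule real_sqrt_le_mono) (simp add: power_divide)
  then show ?thesis by simp
qed

lemma half_le_fs_c_fs_A_0_0:
  assumes "0 < k" and "1 \<le> n"
  shows "1/2 \<le> fs_c k n * fs_A n 0 0"
proof -
  have "0 \<le> fs_c k n" using one_le_fs_c[OF assms] by linarith
  then show ?thesis
    using mult_mono[OF one_le_fs_c[OF assms] half_le_fs_A_0_0[OF assms(2)]] by simp
qed

lemma zonal_xa_0: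
  "zonal_xa k 0 f l = f (l + 1) * fs_c k (l + 1) * fs_A (l + 1) 0 0
                    + (if 1 \<le> l then f (l - 1) * fs_c k l * fs_A l 0 0 else 0)"
  by (simp add: zonal_xa_def fs_B_def)

lemma sum_quadratic: "(\<Sum>l<L. real l ^ 2 + real l + 1) = real L * (real L ^ 2 + 2) / 3"
  by (induction L) (simp_all add: field_simps power2_eq_square)

lemma second_moment_sine_le:
  assumes "1 \<le> L" and "0 < k"
  shows "(\<Sum>l\<le>L. sine_amp L l ^ 2 * xsq_eig L k l)
           \<le> 1 - sine_amp L L ^ 2 * (1 - xsq_eig L k L)
             + 2 / (real L + 2) * (real L * (real L ^ 2 + 2) / 3) / k"
proof -
  have split: "(\<Sum>l\<le>L. g l) = (\<Sum>l<L. g l) + g L" for g :: "nat \<Rightarrow> real"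
    by (simp add: lessThan_Suc_atMost[symmetric])
  have "(\<Sum>l<L. sine_amp L l ^ 2 * xsq_eig L k l)
      = (\<Sum>l<L. sine_amp L l ^ 2) + (\<Sum>l<L. sine_amp L l ^ 2 * ((real l ^ 2 + real l + 1) / k))"
    using assms(2) by (simp add: sum.distrib[symmetric] xsq_eig_below_top algebra_simps)
  also have "(\<Sum>l<L. sine_amp L l ^ 2) = 1 - sine_amp L L ^ 2"
    using sum_sine_amp_sq[of L] split[of "\<lambda>l. sine_amp L l ^ 2"] by simp
  also have "(\<Sum>l<L. sine_amp L l ^ 2 * ((real l ^ 2 + real l + 1) / k))
      \<le> (\<Sum>l<L. 2 / (real L + 2) * ((real l ^ 2 + real l + 1) / k))"
    using assms(2) by (intro sum_mono mult_right_mono sine_amp_sq_le) auto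
  also have "\<dots> = 2 / (real L + 2) * (\<Sum>l<L. real l ^ 2 + real l + 1) / k"
    by (simp add: sum_distrib_left sum_divide_distrib)
  also have "\<dots> = 2 / (real L + 2) * (real L * (real L ^ 2 + 2) / 3) / k"
    by (simp only: sum_quadratic)
  finally show ?thesis
    unfolding split[of "\<lambda>l. sine_amp L l ^ 2 * xsq_eig L k l"] by (simp add: algebra_simps)
qed

text \<open>Termwise c_l A_l^{0,0} \<ge> 1/2, and the recurrence of the sine profile turns the resulting
  hopping sum into cos(pi/(L+2)); only the coefficient at l = 1 is kept sharper.\<close>
lemma sine_amp_mult_zonal_xa_ge:
  assumes "l \<le> L" and "0 < k"
  shows "cos (pi / (real L + 2)) * sine_amp L l ^ 2
           + (if l \<le> 1 then (fs_c k 1 * fs_A 1 0 0 - 1/2) * (sine_amp L 0 * sine_amp L 1) else 0)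
         \<le> sine_amp L l * zonal_xa k 0 (sine_amp L) l"
proof -
  define C where "C = cos (pi / (real L + 2))"
  let ?s = "sine_amp L"
  let ?a = "(fs_c k 1 * fs_A 1 0 0 - 1/2) * (?s 0 * ?s 1)"
  show ?thesis
  proof (cases "l = 0")
    case True
    have "?s (Suc 0) = 2 * C * ?s 0"
      using sine_amp_1 unfolding C_def by simp
    with True show ?thesis
      unfolding C_def[symmetric] by (simp add: zonal_xa_0 power2_eq_square algebra_simps)
  next
    case False
    then have l1: "1 \<le> l" by simp
    have nn: "0 \<le> ?s l" "0 \<le> ?s (l + 1)" "0 \<le> ?s (l - 1)"
      using assms(1) by (auto intro: sine_amp_nonneg)
    have up: "?s l * ?s (l + 1) * (1/2) \<le> ?s l * ?s (l + 1) * (fs_c k (l + 1) * fs_A (l + 1) 0 0)"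
      using nn half_le_fs_c_fs_A_0_0[OF assms(2), of "l + 1"] by (intro mult_left_mono) auto
    have down: "?s l * ?s (l - 1) * (1/2) + (if l = 1 then ?a else 0)
                  \<le> ?s l * ?s (l - 1) * (fs_c k l * fs_A l 0 0)"
    proof (cases "l = 1")
      case False
      have "?s l * ?s (l - 1) * (1/2) \<le> ?s l * ?s (l - 1) * (fs_c k l * fs_A l 0 0)"
        using nn half_le_fs_c_fs_A_0_0[OF assms(2) l1] by (intro mult_left_mono) auto
      with False show ?thesis by simp
    qed (simp add: algebra_simps)
    have rec: "?s (l + 1) + ?s (l - 1) = 2 * C * ?s l"
      using sine_amp_rec[of L "l - 1"] l1 unfolding C_def by simp
    have "C * ?s l ^ 2 = ?s l * (?s (l + 1) + ?s (l - 1)) / 2"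
      unfolding rec by (simp add: power2_eq_square)
    then have "C * ?s l ^ 2 = ?s l * ?s (l + 1) * (1/2) + ?s l * ?s (l - 1) * (1/2)"
      by (simp add: algebra_simps)
    then show ?thesis
      using up down l1 unfolding C_def[symmetric] by (simp add: zonal_xa_0 algebra_simps)
  qed
qed

lemma first_moment_sine_ge:
  assumes "1 \<le> L" and "0 < k"
  shows "cos (pi / (real L + 2)) + 2 * ((fs_c k 1 * fs_A 1 0 0 - 1/2) * (sine_amp L 0 * sine_amp L 1))
           \<le> (\<Sum>l\<le>L. sine_amp L l * zonal_xa k 0 (sine_amp L) l)"
proof -
  define a where "a = (fs_c k 1 * fs_A 1 0 0 - 1/2) * (sine_amp L 0 * sine_amp L 1)"
  have "{..L} \<inter> {l. l \<le> 1} = {0, 1}"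
    using assms(1) by auto
  then have "cos (pi / (real L + 2)) + 2 * a
               = (\<Sum>l\<le>L. cos (pi / (real L + 2)) * sine_amp L l ^ 2 + (if l \<le> 1 then a else 0))"
    by (simp add: sum.distrib sum_distrib_left[symmetric] sum_sine_amp_sq sum.If_cases)
  also have "\<dots> \<le> (\<Sum>l\<le>L. sine_amp L l * zonal_xa k 0 (sine_amp L) l)"
    using sine_amp_mult_zonal_xa_ge[OF _ assms(2)] unfolding a_def
    by (intro sum_mono) auto
  finally show ?thesis
    unfolding a_def .
qed

text \<open>308/1000 = 4 (577/1000 - 1/2) with 577/1000 < 1/sqrt 3 \<le> c_1 A_1^{0,0}; squaring doubles it.\<close>
lemma first_moment_sine_sq_ge:
  assumes "1 \<le> L" and "0 < k"
  shows "cos (pi / (real L + 2)) ^ 2 * (1 + 616/1000 * (2 / (real L + 2)) * sin (pi / (real L + 2)) ^ 2)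
           \<le> (\<Sum>l\<le>L. sine_amp L l * zonal_xa k 0 (sine_amp L) l) ^ 2"
proof -
  define S where "S = sin (pi / (real L + 2)) ^ 2"
  define \<alpha> where "\<alpha> = 2 / (real L + 2)"
  define C where "C = cos (pi / (real L + 2))"
  let ?s = "sine_amp L"
  have "pi * 1 \<le> pi * ((real L + 2) / 2)"
    by (intro mult_left_mono) auto
  then have "pi / (real L + 2) \<le> pi / 2" and "0 \<le> pi / (real L + 2)"
    by (simp_all add: field_simps)
  then have C0: "0 \<le> C"
    unfolding C_def using pi_gt_zero by (intro cos_ge_zero) linarith+
  have "577/1000 \<le> fs_c k 1 * fs_A 1 0 0"
    using mult_mono[OF one_le_fs_c[OF assms(2), of 1] fs_A_1_0_0_ge] one_le_fs_c[OF assms(2), of 1]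
    by simp
  moreover have "0 \<le> ?s 0 * ?s 1"
    using sine_amp_nonneg[of 0 L] sine_amp_nonneg[of 1 L] by simp
  ultimately have "2 * (77/1000 * (?s 0 * ?s 1)) \<le> 2 * ((fs_c k 1 * fs_A 1 0 0 - 1/2) * (?s 0 * ?s 1))"
    by (intro mult_left_mono mult_right_mono) auto
  moreover have s01: "?s 0 * ?s 1 = 2 * \<alpha> * S * C"
  proof -
    have "?s 0 ^ 2 = \<alpha> * S"
      unfolding sine_amp_def S_def \<alpha>_def by (simp add: power_mult_distrib)
    moreover have "?s 0 * ?s 1 = 2 * C * ?s 0 ^ 2"
      unfolding sine_amp_1 C_def by (simp add: power2_eq_square)
    ultimately show ?thesis by simp
  qed
  ultimately have "C + 2 * (77/1000 * (2 * \<alpha> * S * C)) \<le> (\<Sum>l\<le>L. ?s l * zonal_xa k 0 ?s l)"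
    using first_moment_sine_ge[OF assms] unfolding C_def[symmetric] s01 by linarith
  then have lower: "C * (1 + 308/1000 * \<alpha> * S) \<le> (\<Sum>l\<le>L. ?s l * zonal_xa k 0 ?s l)"
    by (simp add: algebra_simps)
  have "(C * (1 + 308/1000 * \<alpha> * S)) ^ 2
          = C ^ 2 * (1 + 616/1000 * \<alpha> * S) + (C * (308/1000 * \<alpha> * S)) ^ 2"
    by (simp add: power2_eq_square algebra_simps)
  then have "C ^ 2 * (1 + 616/1000 * \<alpha> * S) \<le> (C * (1 + 308/1000 * \<alpha> * S)) ^ 2"
    by (simp only: le_add_same_cancel1 zero_le_power2)
  also have "\<dots> \<le> (\<Sum>l\<le>L. ?s l * zonal_xa k 0 ?s l) ^ 2"
    using lower C0 by (intro power_mono) (auto simp: S_def \<alpha>_def)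
  finally show ?thesis
    unfolding C_def S_def \<alpha>_def .
qed

text \<open>For k \<ge> L^2 (L+1)^2, xsq_top_gap L bounds 1 - xsq_eig L k L from below and xsq_excess L
  bounds the 1/k-corrections of the second moment from above.\<close>
definition xsq_top_gap :: "nat \<Rightarrow> real" where
  "xsq_top_gap L = 1 - (1 + 1 / (real L + 1) ^ 2) * real L / (2 * real L + 1)"

definition xsq_excess :: "nat \<Rightarrow> real" where
  "xsq_excess L = 2 * (real L ^ 2 + 2) / (3 * real L * (real L + 2) * (real L + 1) ^ 2)"

lemma second_moment_sine_le_top_gap:
  assumes L: "1 \<le> L" and kL: "(real L)\<^sup>2 * (real L + 1)\<^sup>2 \<le> k"
  shows "(\<Sum>l\<le>L. sine_amp L l ^ 2 * xsq_eig L k l)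
           \<le> 1 - 2 / (real L + 2) * sin (pi / (real L + 2)) ^ 2 * xsq_top_gap L + xsq_excess L"
proof -
  define \<alpha> where "\<alpha> = 2 / (real L + 2)"
  have Lpos: "0 < real L" using L by simp
  then have "0 < (real L)\<^sup>2 * (real L + 1)\<^sup>2" by simp
  then have kpos: "0 < k" using kL by linarith
  have \<alpha>pos: "0 < \<alpha>" unfolding \<alpha>_def by simp
  have "real L ^ 2 / k \<le> 1 / (real L + 1) ^ 2"
    using kL kpos Lpos by (simp add: divide_simps)
  then have "xsq_eig L k L \<le> (1 + 1 / (real L + 1) ^ 2) * real L / (2 * real L + 1)"
    unfolding xsq_eig_top[OF L kpos] using Lpos by (intro divide_right_mono mult_right_mono) auto
  then have gap: "sine_amp L L ^ 2 * xsq_top_gap L \<le> sine_amp L L ^ 2 * (1 - xsq_eig L k L)"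
    unfolding xsq_top_gap_def by (intro mult_left_mono) auto
  have "\<alpha> * (real L * (real L ^ 2 + 2) / 3) / k
          \<le> \<alpha> * (real L * (real L ^ 2 + 2) / 3) / ((real L)\<^sup>2 * (real L + 1)\<^sup>2)"
    using kL kpos Lpos \<alpha>pos by (intro divide_left_mono) auto
  also have "\<dots> = xsq_excess L"
    using Lpos unfolding xsq_excess_def \<alpha>_def
    by (simp add: divide_simps) (simp add: algebra_simps power2_eq_square)
  finally have "\<alpha> * (real L * (real L ^ 2 + 2) / 3) / k \<le> xsq_excess L" .
  moreover have sL: "sine_amp L L ^ 2 = \<alpha> * sin (pi / (real L + 2)) ^ 2"
    unfolding sine_amp_self \<alpha>_def by (simp add: power_mult_distrib)
  ultimately show ?thesis
    using second_moment_sine_le[OF L kpos, unfolded sL] gap[unfolded sL] unfolding \<alpha>_def by linarith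
qed

lemma fs_var_chi_tilde_le:
  assumes L: "1 \<le> L" and kL: "(real L)\<^sup>2 * (real L + 1)\<^sup>2 \<le> k"
  shows "fs_var L k (fs_chi_tilde L)
           \<le> sin (pi / (real L + 2)) ^ 2
             - 2 / (real L + 2) * sin (pi / (real L + 2)) ^ 2 * xsq_top_gap L
             - 616/1000 * (2 / (real L + 2)) * sin (pi / (real L + 2)) ^ 2 * (1 - sin (pi / (real L + 2)) ^ 2)
             + xsq_excess L"
proof -
  have "0 < (real L)\<^sup>2 * (real L + 1)\<^sup>2" using L by simp
  then have "0 < k" using kL by linarith
  have rearrange: "(1 - \<alpha> * S * g + e) - (1 - S) * (1 + c * \<alpha> * S) = S - \<alpha> * S * g - c * \<alpha> * S * (1 - S) + e"
    for \<alpha> S g e c :: real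
    by (simp add: algebra_simps)
  have "fs_var L k (fs_chi_tilde L)
          \<le> (1 - 2 / (real L + 2) * sin (pi / (real L + 2)) ^ 2 * xsq_top_gap L + xsq_excess L)
            - cos (pi / (real L + 2)) ^ 2
              * (1 + 616/1000 * (2 / (real L + 2)) * sin (pi / (real L + 2)) ^ 2)"
    unfolding fs_chi_tilde_eq_fs_zonal fs_var_fs_zonal[where f = "sine_amp L", OF sine_amp_Suc_self]
    by (rule diff_mono[OF second_moment_sine_le_top_gap[OF L kL] first_moment_sine_sq_ge[OF L \<open>0 < k\<close>]])
  then show ?thesis
    unfolding cos_squared_eq rearrange .
qed

lemma xsq_top_gap_nonneg: "0 \<le> xsq_top_gap L"
proof -
  have "1 / (real L + 1) ^ 2 \<le> 1" by (simp add: divide_simps)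
  then have "(1 + 1 / (real L + 1) ^ 2) * real L \<le> 2 * real L + 1"
    using mult_right_mono[of "1 / (real L + 1) ^ 2" 1 "real L"] by (simp add: algebra_simps)
  then show ?thesis
    unfolding xsq_top_gap_def by (simp add: divide_le_eq_1_pos)
qed

lemma xsq_excess_le:
  assumes "1 \<le> L"
  shows "xsq_excess L \<le> 2 / (3 * (real L + 1) ^ 2)"
proof -
  have "2 * (real L ^ 2 + 2) \<le> 2 * (real L * (real L + 2))"
    using assms by (simp add: power2_eq_square algebra_simps)
  then have "xsq_excess L \<le> 2 * (real L * (real L + 2)) / (3 * real L * (real L + 2) * (real L + 1) ^ 2)"
    unfolding xsq_excess_def by (intro divide_right_mono) auto
  also have "\<dots> = (real L * (real L + 2) * 2) / (real L * (real L + 2) * (3 * (real L + 1) ^ 2))"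
    by (simp add: ac_simps)
  also have "\<dots> = 2 / (3 * (real L + 1) ^ 2)"
    using assms by (intro mult_divide_mult_cancel_left) simp
  finally show ?thesis .
qed

lemma fs_var_chi_tilde_le_sin_sq:
  assumes "1 \<le> L" and "(real L)\<^sup>2 * (real L + 1)\<^sup>2 \<le> k"
  shows "fs_var L k (fs_chi_tilde L) \<le> sin (pi / (real L + 2)) ^ 2 + xsq_excess L"
proof -
  define S where "S = sin (pi / (real L + 2)) ^ 2"
  have "0 \<le> S" "S \<le> 1" unfolding S_def by (auto simp: abs_square_le_1)
  then have "0 \<le> 2 / (real L + 2) * S * xsq_top_gap L" "0 \<le> 616/1000 * (2 / (real L + 2)) * S * (1 - S)"
    using xsq_top_gap_nonneg by simp_all
  then show ?thesis
    using fs_var_chi_tilde_le[OF assms] unfolding S_def by linarith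
qed

section \<open>Numerical bounds\<close>

lemma sin_sq_le_sq: "sin x ^ 2 \<le> (x :: real) ^ 2"
  using abs_sin_x_le_abs_x[of x] by (simp add: abs_le_square_iff)

lemma pi_less_63_20: "pi < 63 / 20"
  using pi_approx(2) by simp

lemma pi_sq_less_10: "pi ^ 2 < 10"
proof -
  have "pi ^ 2 < (63 / 20) ^ 2"
    using pi_less_63_20 by (intro power_strict_mono) auto
  then show ?thesis by (simp add: power_divide)
qed

lemma sin_le_taylor_7:
  fixes x :: real
  assumes "0 \<le> x"
  shows "sin x \<le> x - x ^ 3 / 6 + x ^ 5 / 120 + x ^ 7 / 5040"
proof -
  have "\<bar>sin x - (\<Sum>m<7. sin_coeff m * x ^ m)\<bar> \<le> inverse (fact 7) * \<bar>x\<bar> ^ 7"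
    by (rule Maclaurin_sin_bound)
  moreover have "(\<Sum>m<7. sin_coeff m * x ^ m) = x - x ^ 3 / 6 + x ^ 5 / 120"
    by (simp add: sin_coeff_def lessThan_nat_numeral fact_numeral)
  ultimately have "\<bar>sin x - (x - x ^ 3 / 6 + x ^ 5 / 120)\<bar> \<le> x ^ 7 / 5040"
    using assms by (simp add: fact_numeral)
  then show ?thesis by linarith
qed

lemma fs_var_chi_tilde_less:
  assumes "1 \<le> L" and "(real L)\<^sup>2 * (real L + 1)\<^sup>2 \<le> k"
  shows "fs_var L k (fs_chi_tilde L) < pi\<^sup>2 / (real L + 2)\<^sup>2 + 1 / (real L + 1)\<^sup>2"
proof -
  have "sin (pi / (real L + 2)) ^ 2 \<le> pi\<^sup>2 / (real L + 2)\<^sup>2"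
    using sin_sq_le_sq[of "pi / (real L + 2)"] by (simp add: power_divide)
  moreover have "xsq_excess L < 1 / (real L + 1)\<^sup>2"
  proof -
    have "(2 / 3) / (real L + 1)\<^sup>2 < 1 / (real L + 1)\<^sup>2"
      by (intro divide_strict_right_mono) auto
    then show ?thesis
      using xsq_excess_le[OF assms(1)] by (simp add: divide_divide_eq_left)
  qed
  ultimately show ?thesis
    using fs_var_chi_tilde_le_sin_sq[OF assms] by linarith
qed

lemma pi_sq_bound_less: "pi\<^sup>2 / (real L + 2)\<^sup>2 + 1 / (real L + 1)\<^sup>2 < 11 / (real L + 1)\<^sup>2"
proof -
  have "pi\<^sup>2 / (real L + 2)\<^sup>2 \<le> pi\<^sup>2 / (real L + 1)\<^sup>2"
    by (intro divide_left_mono power_mono) auto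
  also have "\<dots> < 10 / (real L + 1)\<^sup>2"
    using pi_sq_less_10 by (intro divide_strict_right_mono) auto
  finally show ?thesis by (simp add: add_divide_distrib[symmetric])
qed

text \<open>For L \<le> 8 the bound sin^2(pi/(L+2)) + xsq_excess L is too weak (already for L = 3), so the
  negative corrections of fs_var_chi_tilde_le are kept and evaluated for each L.\<close>
lemma fs_var_chi_tilde_less_inverse_small:
  assumes L: "L \<in> {3, 4, 5, 6, 7, 8}" and kL: "(real L)\<^sup>2 * (real L + 1)\<^sup>2 \<le> k"
  shows "fs_var L k (fs_chi_tilde L) < 1 / (real L + 1)"
proof -
  define S where "S = sin (pi / (real L + 2)) ^ 2"
  define \<alpha> where "\<alpha> = 2 / (real L + 2)"
  define u where "u = 63 / (20 * (real L + 2))"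
  define U where "U = (u - u ^ 3 / 6 + u ^ 5 / 120 + u ^ 7 / 5040) ^ 2"
  define b where "b = 1 - \<alpha> * xsq_top_gap L - 616/1000 * \<alpha>"
  define g where "g = 616/1000 * \<alpha>"
  have numeric: "0 \<le> b" "U * b + g * U ^ 2 + xsq_excess L < 1 / (real L + 1)"
    using L by (auto simp: U_def u_def b_def g_def \<alpha>_def xsq_top_gap_def xsq_excess_def power_divide)
  have "sin (pi / (real L + 2)) \<le> sin u"
  proof -
    have "pi / (real L + 2) \<le> (63 / 20) / (real L + 2)"
      using pi_less_63_20 by (intro divide_right_mono) auto
    then have "pi / (real L + 2) \<le> u"
      unfolding u_def by (simp add: divide_divide_eq_left)
    moreover have "u \<le> pi / 2"
      unfolding u_def using L pi_gt3 by (auto simp: field_simps)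
    moreover have "0 \<le> pi / (real L + 2)" by simp
    ultimately show ?thesis
      using pi_gt_zero by (subst sin_mono_le_eq) linarith+
  qed
  also have "\<dots> \<le> u - u ^ 3 / 6 + u ^ 5 / 120 + u ^ 7 / 5040"
    unfolding u_def by (rule sin_le_taylor_7) simp
  finally have SU: "S \<le> U"
    unfolding S_def U_def using pi_gt_zero L by (intro power_mono sin_ge_zero) (auto simp: field_simps)
  have S0: "0 \<le> S" unfolding S_def by simp
  have "fs_var L k (fs_chi_tilde L)
          \<le> S - \<alpha> * S * xsq_top_gap L - 616/1000 * \<alpha> * S * (1 - S) + xsq_excess L"
    using fs_var_chi_tilde_le[OF _ kL] L unfolding S_def \<alpha>_def by auto
  also have "\<dots> = S * b + g * S ^ 2 + xsq_excess L"
    unfolding b_def g_def by (simp add: field_simps power2_eq_square)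
  also have "\<dots> \<le> U * b + g * U ^ 2 + xsq_excess L"
    using SU S0 numeric(1) unfolding g_def \<alpha>_def
    by (intro add_mono mult_right_mono mult_left_mono power_mono order.refl) auto
  also have "\<dots> < 1 / (real L + 1)"
    by (rule numeric(2))
  finally show ?thesis .
qed

lemma inverse_sq_sum_less_inverse:
  fixes x :: real
  assumes "9 \<le> x"
  shows "10 / (x + 2) ^ 2 + 2 / (3 * (x + 1) ^ 2) < 1 / (x + 1)"
proof -
  have "3 * (x + 1) * (x + 2) ^ 2 - (30 * (x + 1) ^ 2 + 2 * (x + 2) ^ 2) = 3 * x ^ 3 - 17 * x ^ 2 - 44 * x - 26"
    by (simp add: power2_eq_square power3_eq_cube algebra_simps)
  moreover have "9 * x ^ 2 \<le> x ^ 3" "9 * x \<le> x ^ 2"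
    using assms by (simp_all add: power2_eq_square power3_eq_cube mult_right_mono)
  ultimately have "30 * (x + 1) ^ 2 + 2 * (x + 2) ^ 2 < 3 * (x + 1) * (x + 2) ^ 2"
    using assms by linarith
  then have "(30 * (x + 1) ^ 2 + 2 * (x + 2) ^ 2) / (3 * (x + 1) ^ 2 * (x + 2) ^ 2)
               < 3 * (x + 1) * (x + 2) ^ 2 / (3 * (x + 1) ^ 2 * (x + 2) ^ 2)"
    using assms by (intro divide_strict_right_mono) auto
  moreover have "x + 1 \<noteq> 0" "x + 2 \<noteq> 0"
    using assms by auto
  then have "10 / (x + 2) ^ 2 + 2 / (3 * (x + 1) ^ 2)
               = (30 * (x + 1) ^ 2 + 2 * (x + 2) ^ 2) / (3 * (x + 1) ^ 2 * (x + 2) ^ 2)"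
        and "1 / (x + 1) = 3 * (x + 1) * (x + 2) ^ 2 / (3 * (x + 1) ^ 2 * (x + 2) ^ 2)"
    by (simp_all add: divide_simps power2_eq_square)
  ultimately show ?thesis by simp
qed

lemma fs_var_chi_tilde_less_inverse:
  assumes "3 \<le> L" and "(real L)\<^sup>2 * (real L + 1)\<^sup>2 \<le> k"
  shows "fs_var L k (fs_chi_tilde L) < 1 / (real L + 1)"
proof (cases "9 \<le> L")
  case True
  have "fs_var L k (fs_chi_tilde L) \<le> pi\<^sup>2 / (real L + 2)\<^sup>2 + 2 / (3 * (real L + 1)\<^sup>2)"
    using fs_var_chi_tilde_le_sin_sq[OF _ assms(2)] xsq_excess_le[of L] sin_sq_le_sq[of "pi / (real L + 2)"]
      assms(1) by (simp add: power_divide)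
  also have "\<dots> < 10 / (real L + 2)\<^sup>2 + 2 / (3 * (real L + 1)\<^sup>2)"
    using pi_sq_less_10 by (simp add: divide_strict_right_mono)
  also have "\<dots> < 1 / (real L + 1)"
    using True by (intro inverse_sq_sum_less_inverse) simp
  finally show ?thesis .
next
  case False
  with assms show ?thesis
    by (intro fs_var_chi_tilde_less_inverse_small) auto
qed

section \<open>Existence of a minimiser\<close>

lemma continuous_on_coordinate: "continuous_on S (\<lambda>v::fs_vec. v q)"
  by (rule continuous_on_subset[OF continuous_on_product_coordinates]) simp

lemma continuous_on_fs_xa: "continuous_on S (fs_xa L k a)"
  unfolding fs_xa_def
  by (intro continuous_on_coordinatewise_then_product continuous_on_sum
        continuous_on_mult' continuous_on_coordinate continuous_on_const)

lemma continuous_on_fs_x: "continuous_on S (fs_x L k i)"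
proof -
  have xa: "continuous_on S (\<lambda>v. fs_xa L k a v p)" for a p
    using continuous_on_product_then_coordinatewise[OF continuous_on_fs_xa] .
  consider "i = 1" | "i = 2" | "i \<noteq> 1" "i \<noteq> 2" by blast
  then show ?thesis
  proof cases
    case 1
    then have "fs_x L k i = (\<lambda>v p. (fs_xa L k 1 v p + fs_xa L k (-1) v p) / 2)"
      by (simp add: fs_x_def fun_eq_iff)
    then show ?thesis
      by (auto intro!: continuous_on_coordinatewise_then_product continuous_intros xa)
  next
    case 2
    then have "fs_x L k i = (\<lambda>v p. (fs_xa L k 1 v p - fs_xa L k (-1) v p) / (2 * \<i>))"
      by (simp add: fs_x_def fun_eq_iff)
    then show ?thesis
      by (auto intro!: continuous_on_coordinatewise_then_product continuous_intros xa)
  next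
    case 3
    then show ?thesis
      by (simp add: fs_x_def continuous_on_fs_xa)
  qed
qed

lemma continuous_on_fs_expect:
  assumes "continuous_on UNIV A"
  shows "continuous_on S (fs_expect L A)"
proof -
  have "continuous_on S (\<lambda>v. A v p)" for p
    using continuous_on_product_then_coordinatewise[OF assms] continuous_on_subset by blast
  then show ?thesis
    unfolding fs_expect_def fs_inner_def
    by (intro continuous_on_sum continuous_on_mult' continuous_on_cnj continuous_on_coordinate) auto
qed

lemma continuous_on_fs_var: "continuous_on S (fs_var L k)"
proof -
  have xx: "continuous_on UNIV (\<lambda>v. fs_x L k i (fs_x L k i v))" for i
    using continuous_on_compose[OF continuous_on_fs_x continuous_on_fs_x] by (simp add: o_def)
  show ?thesis
    unfolding fs_var_def by (intro continuous_intros continuous_on_fs_expect xx continuous_on_fs_x)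
qed

lemma norm_le_1_of_fs_unit:
  assumes "fs_unit L v"
  shows "cmod (v p) \<le> 1"
proof (cases "p \<in> fs_idx L")
  case True
  have "fs_inner L v v = complex_of_real (\<Sum>q\<in>fs_idx L. cmod (v q) ^ 2)"
    unfolding fs_inner_def of_real_sum by (rule sum.cong[OF refl]) (metis complex_norm_square mult.commute)
  then have "(\<Sum>q\<in>fs_idx L. cmod (v q) ^ 2) = 1"
    using assms unfolding fs_unit_def by (metis of_real_eq_1_iff)
  moreover have "cmod (v p) ^ 2 \<le> (\<Sum>q\<in>fs_idx L. cmod (v q) ^ 2)"
    using True by (intro member_le_sum) auto
  ultimately show ?thesis
    by (simp add: power_le_one_iff)
next
  case False
  then have "v p = 0" using assms unfolding fs_unit_def by blast
  then show ?thesis by simp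
qed

lemma compact_fs_unit: "compact {v. fs_unit L v}"
proof -
  define K :: "fs_vec set" where "K = PiE UNIV (\<lambda>p. if p \<in> fs_idx L then cball 0 1 else {0})"
  have "compactin (product_topology (\<lambda>i. euclidean) UNIV) K"
    unfolding K_def compactin_PiE by auto
  then have "compact K"
    by (simp add: euclidean_product_topology)
  moreover have "{v. fs_unit L v} \<subseteq> K"
    unfolding K_def using norm_le_1_of_fs_unit by (auto simp: fs_unit_def)
  moreover have "closed {v. fs_unit L v}"
  proof -
    have "{v. fs_unit L v} = (\<Inter>p\<in>- fs_idx L. {v. v p = 0}) \<inter> {v. fs_inner L v v = 1}"
      unfolding fs_unit_def by auto
    moreover have "closed {v::fs_vec. v p = 0}" for p
      by (rule closed_Collect_eq[OF continuous_on_coordinate continuous_on_const])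
    moreover have "closed {v. fs_inner L v v = 1}"
      unfolding fs_inner_def
      by (intro closed_Collect_eq continuous_on_sum continuous_on_mult continuous_on_cnj
            continuous_on_coordinate continuous_on_const)
    ultimately show ?thesis by (simp add: closed_INT closed_Int)
  qed
  ultimately show ?thesis
    by (metis compact_Int_closed inf.absorb_iff2)
qed

lemma fs_var_attains_min:
  "\<exists>chi0. fs_unit L chi0 \<and> (\<forall>chi. fs_unit L chi \<longrightarrow> fs_var L k chi0 \<le> fs_var L k chi)"
proof -
  have "{v. fs_unit L v} \<noteq> {}"
    using fs_unit_fs_chi_tilde by blast
  then obtain chi0 where "fs_unit L chi0" "\<forall>chi \<in> {v. fs_unit L v}. fs_var L k chi0 \<le> fs_var L k chi"
    using continuous_attains_inf[OF compact_fs_unit _ continuous_on_fs_var] by blast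
  then show ?thesis by auto
qed

theorem mainTheorem10:
  fixes L :: nat and k :: real
  assumes "L \<ge> 3"
    and "k \<ge> (real L)\<^sup>2 * (real L + 1)\<^sup>2"
  shows "fs_var L k (fs_chi_tilde L) < pi\<^sup>2 / (real L + 2)\<^sup>2 + 1 / (real L + 1)\<^sup>2
       \<and> pi\<^sup>2 / (real L + 2)\<^sup>2 + 1 / (real L + 1)\<^sup>2 < 11 / (real L + 1)\<^sup>2
       \<and> fs_unit L (fs_chi_tilde L)
       \<and> (\<exists>chi0. fs_unit L chi0 \<and> (\<forall>chi. fs_unit L chi \<longrightarrow> fs_var L k chi0 \<le> fs_var L k chi)
              \<and> fs_var L k chi0 \<le> fs_var L k (fs_chi_tilde L))
       \<and> fs_var L k (fs_chi_tilde L) < 1 / (real L + 1)"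
proof -
  obtain chi0 where "fs_unit L chi0" "\<forall>chi. fs_unit L chi \<longrightarrow> fs_var L k chi0 \<le> fs_var L k chi"
    using fs_var_attains_min by blast
  moreover have "1 \<le> L" using assms(1) by simp
  ultimately show ?thesis
    using fs_var_chi_tilde_less[OF _ assms(2)] pi_sq_bound_less[of L] fs_unit_fs_chi_tilde[of L]
      fs_var_chi_tilde_less_inverse[OF assms] by blast
qed

end
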